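(* Consider a rule of the PJR-Exact family run on $(\mathcal{A},k)$, and fix $j$ with $1\le j\le k$ such that iterations $1,\dots,j$ are all normal. Then for every candidate $c\in C\setminus W_j$ with $\ell_j(c)\ge1$, $$\sum_{i\in N:\ c\in A_i,\ |A_i\cap W_j|<\ell_j(c)}\left(f_i^j-\frac{\ell_j(c)-|A_i\cap W_j|-1}{\ell_j(c)}\right)\ \ge\ q.$$
   Context: Setting: voters $N=\{1,\dots,n\}$, candidates $C=\{c_1,\dots,c_m\}$, approval ballots $A_i\subseteq C$, $\mathcal{A}=(A_1,\dots,A_n)$, $k$ a positive integer with $k\le|C|$, $q=n/k$, $N_c=\{i: c\in A_i\}$. Convention: $\max\emptyset=0$. Dissatisfaction level: for $W\subseteq C$ with $|W|\le k$ and $c\in C\setminus W$, $\ell(c,W)$ is the largest nonnegative integer $\ell$ with $\ell=\lfloor \frac{k}{n}|\{i\in N: c\in A_i,\ |A_i\cap W|<\ell\}|\rfloor$. PJR-Exact family: iterative procedures selecting $w_1,\dots,w_k$, $W_0=\emptyset$, $W_j=W_{j-1}\cup\{w_j\}$, $w_j\notin W_{j-1}$, with vote fractions $f_i^0=1$, $0\le f_i^j\le f_i^{j-1}$, such that at each iteration $j$: (a) $f_i^j=f_i^{j-1}$ for $i\notin N_{w_j}$; (b) with $s=\sum_{i\in N_{w_j}}f_i^{j-1}$, if $s>q$ then $\sum_{i\in N_{w_j}}(f_i^{j-1}-f_i^j)=q$, and if $s\le q$ then $f_i^j=0$ for all $i\in N_{w_j}$; (c) if some $c\in C\setminus W_{j-1}$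 has $\sum_{i\in N_c}f_i^{j-1}\ge q$ then $\sum_{i\in N_{w_j}}f_i^{j-1}\ge q$. Notation along a run: $\ell_j(c)=\ell(c,W_j)$ for $c\in C\setminus W_j$; for $c\in C\setminus W_j$ and $i\in N_c$, $\ell_j(i,c)=\max_{c'\in A_i\setminus(W_j\cup\{c\})}\ell_j(c')$; $g_i^j(c)=0$ if $\ell_j(i,c)\le|A_i\cap W_j|$ and $g_i^j(c)=\frac{\ell_j(i,c)-|A_i\cap W_j|-1}{\ell_j(i,c)}$ otherwise. Normal state: $c\in C\setminus W_j$ is in normal state after $j$ iterations if (1) for each $i\in N_c$ with $\ell_j(i,c)>|A_i\cap W_j|$ we have $f_i^j\ge\frac{\ell_j(i,c)-|A_i\cap W_j|}{\ell_j(i,c)}$, and (2) $\sum_{i\in N_c}(f_i^j-g_i^j(c))\ge q$. Normal iteration: iteration $j$ ($1\le j\le k$) is normal if $w_j$ is in normal state after $j-1$ iterations and, for each $i\in N_{w_j}$ with $\ell_{j-1}(i,w_j)>|A_i\cap W_{j-1}|$, $f_i^j\ge\frac{\ell_{j-1}(i,w_j)-|A_i\cap W_j|}{\ell_{j-1}(i,w_j)}$. *)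

theory Defs
  imports Main Complex_Main
begin

text \<open>A run is given by the chosen candidates w 1, ..., w k and vote fractions f j i
  (fraction of voter i after j iterations).\<close>

definition voters :: "nat \<Rightarrow> nat set" where
  "voters n = {1..n}"

definition supporters :: "nat \<Rightarrow> (nat \<Rightarrow> 'c set) \<Rightarrow> 'c \<Rightarrow> nat set" where
  "supporters n A c = {i \<in> voters n. c \<in> A i}"

definition quota :: "nat \<Rightarrow> nat \<Rightarrow> real" where
  "quota n k = real n / real k"

definition dlevel :: "nat \<Rightarrow> nat \<Rightarrow> (nat \<Rightarrow> 'c set) \<Rightarrow> 'c set \<Rightarrow> 'c \<Rightarrow> nat" where
  "dlevel n k A W c = (GREATEST l::nat. int l =
      \<lfloor>real k / real n * real (card {i \<in> voters n. c \<in> A i \<and> card (A i \<inter> W) < l})\<rfloor>)"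

definition vlevel :: "nat \<Rightarrow> nat \<Rightarrow> (nat \<Rightarrow> 'c set) \<Rightarrow> 'c set \<Rightarrow> nat \<Rightarrow> 'c \<Rightarrow> nat" where
  "vlevel n k A W i c =
     (if A i - (W \<union> {c}) = {} then 0 else Max (dlevel n k A W ` (A i - (W \<union> {c}))))"

definition gfun :: "nat \<Rightarrow> nat \<Rightarrow> (nat \<Rightarrow> 'c set) \<Rightarrow> 'c set \<Rightarrow> nat \<Rightarrow> 'c \<Rightarrow> real" where
  "gfun n k A W i c =
     (if vlevel n k A W i c \<le> card (A i \<inter> W) then 0
      else (real (vlevel n k A W i c) - real (card (A i \<inter> W)) - 1) / real (vlevel n k A W i c))"

definition Wset :: "(nat \<Rightarrow> 'c) \<Rightarrow> nat \<Rightarrow> 'c set" where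
  "Wset w j = w ` {1..j}"

definition PJR_exact_run ::
  "nat \<Rightarrow> nat \<Rightarrow> 'c set \<Rightarrow> (nat \<Rightarrow> 'c set) \<Rightarrow> (nat \<Rightarrow> 'c) \<Rightarrow> (nat \<Rightarrow> nat \<Rightarrow> real) \<Rightarrow> bool" where
  "PJR_exact_run n k C A w f \<longleftrightarrow>
     (\<forall>i \<in> voters n. f 0 i = 1) \<and>
     (\<forall>j \<in> {1..k}.
        w j \<in> C \<and> w j \<notin> Wset w (j - 1) \<and>
        (\<forall>i \<in> voters n. 0 \<le> f j i \<and> f j i \<le> f (j - 1) i) \<and>
        (\<forall>i \<in> voters n. i \<notin> supporters n A (w j) \<longrightarrow> f j i = f (j - 1) i) \<and>
        ((\<Sum>i \<in> supporters n A (w j). f (j - 1) i) > quota n k \<longrightarrow>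
           (\<Sum>i \<in> supporters n A (w j). f (j - 1) i - f j i) = quota n k) \<and>
        ((\<Sum>i \<in> supporters n A (w j). f (j - 1) i) \<le> quota n k \<longrightarrow>
           (\<forall>i \<in> supporters n A (w j). f j i = 0)) \<and>
        ((\<exists>c \<in> C - Wset w (j - 1). (\<Sum>i \<in> supporters n A c. f (j - 1) i) \<ge> quota n k) \<longrightarrow>
           (\<Sum>i \<in> supporters n A (w j). f (j - 1) i) \<ge> quota n k))"

definition normal_state ::
  "nat \<Rightarrow> nat \<Rightarrow> (nat \<Rightarrow> 'c set) \<Rightarrow> 'c set \<Rightarrow> (nat \<Rightarrow> real) \<Rightarrow> 'c \<Rightarrow> bool" where
  "normal_state n k A W fj c \<longleftrightarrow>
     (\<forall>i \<in> supporters n A c. vlevel n k A W i c > card (A i \<inter> W) \<longrightarrow>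
        fj i \<ge> (real (vlevel n k A W i c) - real (card (A i \<inter> W))) / real (vlevel n k A W i c)) \<and>
     (\<Sum>i \<in> supporters n A c. fj i - gfun n k A W i c) \<ge> quota n k"

definition normal_iteration ::
  "nat \<Rightarrow> nat \<Rightarrow> (nat \<Rightarrow> 'c set) \<Rightarrow> (nat \<Rightarrow> 'c) \<Rightarrow> (nat \<Rightarrow> nat \<Rightarrow> real) \<Rightarrow> nat \<Rightarrow> bool" where
  "normal_iteration n k A w f j \<longleftrightarrow>
     normal_state n k A (Wset w (j - 1)) (f (j - 1)) (w j) \<and>
     (\<forall>i \<in> supporters n A (w j).
        vlevel n k A (Wset w (j - 1)) i (w j) > card (A i \<inter> Wset w (j - 1)) \<longrightarrow>
        f j i \<ge> (real (vlevel n k A (Wset w (j - 1)) i (w j)) - real (card (A i \<inter> Wset w j)))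
                 / real (vlevel n k A (Wset w (j - 1)) i (w j)))"

end

theory Submission
  imports Defs
begin

text \<open>Write \<open>l\<close> for the level of \<open>c\<close> after \<open>j\<close> iterations, \<open>S\<close> for the voters approving \<open>c\<close>
  with fewer than \<open>l\<close> approved winners, and \<open>a_i = |A_i \<inter> W_j|\<close>. As \<open>l\<close> is a fixpoint of
  \<open>x \<mapsto> \<lfloor>|S_x| / q\<rfloor>\<close>, we get \<open>|S| \<ge> l q\<close>, so it suffices that each summand is at least
  \<open>1/l\<close>, i.e. \<open>f_i^j \<ge> (l - a_i)/l\<close>. A voter who approves no winner still has \<open>f_i^j = 1\<close>.
  Otherwise let \<open>t\<close> be the last iteration whose winner \<open>i\<close> approves: then \<open>f_i^j = f_i^t\<close>, and
  normality of iteration \<open>t\<close> gives \<open>f_i^t \<ge> (L - a_i)/L\<close> for \<open>L = l_{t-1}(i, w_t)\<close>, where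
  \<open>L \<ge> l_{t-1}(c) \<ge> l\<close> because levels can only drop as the committee grows.\<close>

lemma floor_scaled_card_voters_le:
  "\<lfloor>real k / real n * real (card {i \<in> voters n. P i})\<rfloor> \<le> int k"
proof -
  have "card {i \<in> voters n. P i} \<le> card (voters n)"
    by (rule card_mono) (auto simp: voters_def)
  also have "\<dots> = n"
    by (simp add: voters_def)
  finally have "real k / real n * real (card {i \<in> voters n. P i}) \<le> real k / real n * real n"
    by (intro mult_left_mono) auto
  also have "\<dots> \<le> real k"
    by (cases "n = 0") auto
  finally show ?thesis
    by (metis floor_mono floor_of_nat)
qed

lemma dlevel_fixpoint:
  "int (dlevel n k A W c) =
    \<lfloor>real k / real n * real (card {i \<in> voters n. c \<in> A i \<and> card (A i \<inter> W) < dlevel n k A W c})\<rfloor>"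
  unfolding dlevel_def
proof (rule GreatestI_nat[where k = 0 and b = k])
  show "y \<le> k"
    if "int y = \<lfloor>real k / real n * real (card {i \<in> voters n. c \<in> A i \<and> card (A i \<inter> W) < y})\<rfloor>" for y
    using floor_scaled_card_voters_le that by (metis of_nat_le_iff)
qed simp

text \<open>A post-fixpoint of a bounded monotone map lies below the greatest fixpoint: the greatest
  post-fixpoint \<open>m\<close> is itself a fixpoint, since \<open>nat (h m)\<close> is again a post-fixpoint above \<open>m\<close>.\<close>
lemma post_fixpoint_le_greatest_fixpoint:
  fixes h :: "nat \<Rightarrow> int"
  assumes mono: "mono h" and bounded: "\<And>l. h l \<le> int b" and post: "int l \<le> h l"
  shows "l \<le> (GREATEST m. int m = h m)"
proof -
  have post_bounded: "y \<le> b" if "int y \<le> h y" for y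
    using bounded[of y] that by linarith
  define m where "m = (GREATEST m. int m \<le> h m)"
  have m_post: "int m \<le> h m"
    unfolding m_def by (rule GreatestI_nat[where P = "\<lambda>y. int y \<le> h y", OF post post_bounded])
  have l_le_m: "l \<le> m"
    unfolding m_def by (rule Greatest_le_nat[where P = "\<lambda>y. int y \<le> h y", OF post post_bounded])
  have "m \<le> nat (h m)"
    using m_post by linarith
  then have "int (nat (h m)) \<le> h (nat (h m))"
    using m_post monoD[OF mono] by fastforce
  then have "nat (h m) \<le> m"
    unfolding m_def by (rule Greatest_le_nat[where P = "\<lambda>y. int y \<le> h y", OF _ post_bounded])
  then have "int m = h m"
    using m_post by linarith
  then have "m \<le> (GREATEST m. int m = h m)"
    by (rule Greatest_le_nat[where b = b]) (use post_bounded in force)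
  with l_le_m show ?thesis
    by simp
qed

lemma dlevel_antimono:
  assumes fin: "\<forall>i \<in> voters n. finite (A i)" and "W \<subseteq> W'"
  shows "dlevel n k A W' c \<le> dlevel n k A W c"
proof -
  define h where
    "h W l = \<lfloor>real k / real n * real (card {i \<in> voters n. c \<in> A i \<and> card (A i \<inter> W) < l})\<rfloor>"
    for W l
  have fin_voters: "finite (voters n)"
    by (simp add: voters_def)
  have mono: "mono (h W)"
  proof (rule monoI)
    fix l l' :: nat
    assume "l \<le> l'"
    then have "card {i \<in> voters n. c \<in> A i \<and> card (A i \<inter> W) < l}
        \<le> card {i \<in> voters n. c \<in> A i \<and> card (A i \<inter> W) < l'}"
      by (intro card_mono) (use fin_voters in auto)
    then show "h W l \<le> h W l'"
      unfolding h_def by (intro floor_mono mult_left_mono) auto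
  qed
  have shrink: "h W' l \<le> h W l" for l
  proof -
    have "card (A i \<inter> W) \<le> card (A i \<inter> W')" if "i \<in> voters n" for i
      using fin that \<open>W \<subseteq> W'\<close> by (intro card_mono) auto
    then have "card {i \<in> voters n. c \<in> A i \<and> card (A i \<inter> W') < l}
        \<le> card {i \<in> voters n. c \<in> A i \<and> card (A i \<inter> W) < l}"
      by (intro card_mono) (use fin_voters in force)+
    then show ?thesis
      unfolding h_def by (intro floor_mono mult_left_mono) auto
  qed
  have "int (dlevel n k A W' c) = h W' (dlevel n k A W' c)"
    unfolding h_def by (rule dlevel_fixpoint)
  then have post: "int (dlevel n k A W' c) \<le> h W (dlevel n k A W' c)"
    using shrink by simp
  have bounded: "h W l \<le> int k" for l
    unfolding h_def by (rule floor_scaled_card_voters_le)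
  have "(GREATEST m. int m = h W m) = dlevel n k A W c"
    by (simp add: dlevel_def h_def)
  with post_fixpoint_le_greatest_fixpoint[OF mono bounded post] show ?thesis
    by simp
qed

lemma dlevel_le_vlevel:
  assumes "finite (A i)" and "c \<in> A i - (W \<union> {d})"
  shows "dlevel n k A W c \<le> vlevel n k A W i d"
  using assms unfolding vlevel_def by (auto intro!: Max_ge)

lemma quota_le_card_div_dlevel:
  assumes "n \<ge> 1" and "k > 0" and "dlevel n k A W c \<ge> 1"
  shows "quota n k \<le>
    real (card {i \<in> voters n. c \<in> A i \<and> card (A i \<inter> W) < dlevel n k A W c}) / real (dlevel n k A W c)"
proof -
  define l where "l = dlevel n k A W c"
  define s where "s = card {i \<in> voters n. c \<in> A i \<and> card (A i \<inter> W) < l}"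
  have "int l = \<lfloor>real k / real n * real s\<rfloor>"
    unfolding l_def s_def by (rule dlevel_fixpoint)
  then have "real l \<le> real k / real n * real s"
    by (metis le_floor_iff of_int_of_nat_eq order.refl)
  then have "real l * real n \<le> real k * real s"
    using assms(1) by (simp add: field_simps)
  then show ?thesis
    using assms unfolding quota_def l_def [symmetric] s_def [symmetric] by (simp add: field_simps)
qed

lemma Wset_mono:
  "s \<le> t \<Longrightarrow> Wset w s \<subseteq> Wset w t"
  unfolding Wset_def by auto

lemma dlevel_le_vlevel_of_earlier_winner:
  assumes fin: "\<forall>i \<in> voters n. finite (A i)" and i: "i \<in> voters n"
    and c: "c \<in> A i - Wset w j" and t: "t \<in> {1..j}"
  shows "dlevel n k A (Wset w j) c \<le> vlevel n k A (Wset w (t - 1)) i (w t)"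
proof -
  have earlier: "Wset w (t - 1) \<subseteq> Wset w j" and "w t \<in> Wset w j"
    using t Wset_mono[of "t - 1" j w] unfolding Wset_def by auto
  have "dlevel n k A (Wset w j) c \<le> dlevel n k A (Wset w (t - 1)) c"
    by (rule dlevel_antimono[OF fin earlier])
  also have "\<dots> \<le> vlevel n k A (Wset w (t - 1)) i (w t)"
    using fin i c \<open>w t \<in> Wset w j\<close> earlier by (intro dlevel_le_vlevel) auto
  finally show ?thesis .
qed

lemma diff_divide_self_mono:
  fixes a l L :: real
  assumes "0 < l" and "l \<le> L" and "0 \<le> a"
  shows "(l - a) / l \<le> (L - a) / L"
proof -
  have "a * l \<le> a * L"
    using assms by (simp add: mult_left_mono)
  then show ?thesis
    using assms by (simp add: field_simps)
qed

lemma PJR_exact_run_fraction_unchanged: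
  assumes run: "PJR_exact_run n k C A w f" and i: "i \<in> voters n"
  shows "t \<le> j \<Longrightarrow> j \<le> k \<Longrightarrow> \<forall>s \<in> {t<..j}. w s \<notin> A i \<Longrightarrow> f j i = f t i"
proof (induction j)
  case (Suc j)
  show ?case
  proof (cases "t = Suc j")
    case False
    then have "t \<le> j"
      using Suc.prems by simp
    have "i \<notin> supporters n A (w (Suc j))"
      using Suc.prems(3) \<open>t \<le> j\<close> by (auto simp: supporters_def)
    then have "f (Suc j) i = f j i"
      using run i Suc.prems(2) unfolding PJR_exact_run_def by fastforce
    also have "\<dots> = f t i"
      using Suc.IH \<open>t \<le> j\<close> Suc.prems by auto
    finally show ?thesis .
  qed simp
qed simp

lemma last_approved_iteration:
  fixes j :: nat
  assumes "\<exists>s \<in> {1..j}. w s \<in> A i"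
  obtains t where "t \<in> {1..j}" and "w t \<in> A i" and "\<forall>s \<in> {t<..j}. w s \<notin> A i"
proof -
  define T where "T = {s \<in> {1..j}. w s \<in> A i}"
  have "T \<subseteq> {1..j}"
    unfolding T_def by blast
  then have "finite T"
    by (rule finite_subset) simp
  moreover have "T \<noteq> {}"
    using assms unfolding T_def by auto
  ultimately
  have "Max T \<in> T" and bound: "\<forall>s \<in> T. s \<le> Max T"
    by auto
  show thesis
  proof (rule that)
    show "Max T \<in> {1..j}" and "w (Max T) \<in> A i"
      using \<open>Max T \<in> T\<close> unfolding T_def by auto
    show "\<forall>s \<in> {Max T<..j}. w s \<notin> A i"
    proof
      fix s
      assume s: "s \<in> {Max T<..j}"
      show "w s \<notin> A i"
      proof
        assume "w s \<in> A i"
        moreover have "1 \<le> Max T"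
          using \<open>Max T \<in> T\<close> unfolding T_def by simp
        ultimately have "s \<in> T"
          using s unfolding T_def by simp
        with bound s show False
          by fastforce
      qed
    qed
  qed
qed

lemma approved_winners_up_to_last_approved:
  assumes "t \<le> j" and "\<forall>s \<in> {t<..j}. w s \<notin> A i"
  shows "A i \<inter> Wset w j = A i \<inter> Wset w t"
  using assms unfolding Wset_def by (auto simp: not_le)

lemma normal_run_fraction_lower_bound:
  assumes run: "PJR_exact_run n k C A w f" and "j \<le> k"
    and normal: "\<forall>t \<in> {1..j}. normal_iteration n k A w f t"
    and fin: "\<forall>i \<in> voters n. finite (A i)"
    and i: "i \<in> voters n" and c: "c \<in> A i - Wset w j"
    and below: "card (A i \<inter> Wset w j) < dlevel n k A (Wset w j) c"
  shows "f j i \<ge> (real (dlevel n k A (Wset w j) c) - real (card (A i \<inter> Wset w j)))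
                  / real (dlevel n k A (Wset w j) c)"
proof -
  define l where "l = dlevel n k A (Wset w j) c"
  define a where "a = card (A i \<inter> Wset w j)"
  have l_pos: "real l > 0"
    using below unfolding l_def by simp
  show ?thesis
  proof (cases "\<exists>s \<in> {1..j}. w s \<in> A i")
    case False
    then have "f j i = f 0 i"
      using PJR_exact_run_fraction_unchanged[OF run i, of 0 j] \<open>j \<le> k\<close> by auto
    also have "\<dots> = 1"
      using run i unfolding PJR_exact_run_def by simp
    finally show ?thesis
      using l_pos unfolding l_def [symmetric] by (simp add: field_simps)
  next
    case True
    then obtain t where t: "t \<in> {1..j}" and approved: "w t \<in> A i"
      and last: "\<forall>s \<in> {t<..j}. w s \<notin> A i"
      by (rule last_approved_iteration)
    have f_eq: "f j i = f t i"
      using PJR_exact_run_fraction_unchanged[OF run i _ \<open>j \<le> k\<close> last] t by simp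
    have "A i \<inter> Wset w j = A i \<inter> Wset w t"
      by (rule approved_winners_up_to_last_approved) (use t last in auto)
    then have a_eq: "card (A i \<inter> Wset w t) = a"
      unfolding a_def by simp
    define L where "L = vlevel n k A (Wset w (t - 1)) i (w t)"
    have "l \<le> L"
      unfolding l_def L_def by (rule dlevel_le_vlevel_of_earlier_winner[OF fin i c t])
    have "card (A i \<inter> Wset w (t - 1)) \<le> card (A i \<inter> Wset w t)"
      using fin i Wset_mono[of "t - 1" t w] by (intro card_mono) auto
    then have "card (A i \<inter> Wset w (t - 1)) < L"
      using a_eq below \<open>l \<le> L\<close> unfolding l_def [symmetric] a_def [symmetric] by simp
    moreover have "normal_iteration n k A w f t"
      using normal t by blast
    ultimately have "f t i \<ge> (real L - real (card (A i \<inter> Wset w t))) / real L"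
      using i approved unfolding normal_iteration_def L_def supporters_def by blast
    moreover have "(real l - real a) / real l \<le> (real L - real a) / real L"
      using l_pos \<open>l \<le> L\<close> by (intro diff_divide_self_mono) auto
    ultimately show ?thesis
      using f_eq a_eq unfolding l_def [symmetric] a_def [symmetric] by simp
  qed
qed

theorem mainTheorem5:
  fixes n k j :: nat and C :: "'c set" and A :: "nat \<Rightarrow> 'c set"
    and w :: "nat \<Rightarrow> 'c" and f :: "nat \<Rightarrow> nat \<Rightarrow> real" and c :: 'c
  assumes "n \<ge> 1" and "finite C" and "\<forall>i \<in> voters n. A i \<subseteq> C"
    and "0 < k" and "k \<le> card C"
    and "PJR_exact_run n k C A w f"
    and "1 \<le> j" and "j \<le> k"
    and "\<forall>t \<in> {1..j}. normal_iteration n k A w f t"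
    and "c \<in> C - Wset w j"
    and "dlevel n k A (Wset w j) c \<ge> 1"
  shows "(\<Sum>i \<in> {i \<in> voters n. c \<in> A i \<and> card (A i \<inter> Wset w j) < dlevel n k A (Wset w j) c}.
            f j i - (real (dlevel n k A (Wset w j) c) - real (card (A i \<inter> Wset w j)) - 1)
                    / real (dlevel n k A (Wset w j) c)) \<ge> quota n k"
proof -
  define l where "l = dlevel n k A (Wset w j) c"
  define S where "S = {i \<in> voters n. c \<in> A i \<and> card (A i \<inter> Wset w j) < l}"
  have fin: "\<forall>i \<in> voters n. finite (A i)"
    using assms(2,3) finite_subset by blast
  have "quota n k \<le> real (card S) / real l"
    unfolding S_def l_def by (rule quota_le_card_div_dlevel[OF assms(1,4,11)])
  also have "\<dots> = (\<Sum>i \<in> S. 1 / real l)"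
    by simp
  also have "\<dots> \<le> (\<Sum>i \<in> S. f j i - (real l - real (card (A i \<inter> Wset w j)) - 1) / real l)"
  proof (rule sum_mono)
    fix i
    assume "i \<in> S"
    then have "i \<in> voters n" and "c \<in> A i - Wset w j" and "card (A i \<inter> Wset w j) < l"
      using assms(10) unfolding S_def by auto
    then have "f j i \<ge> (real l - real (card (A i \<inter> Wset w j))) / real l"
      unfolding l_def by (rule normal_run_fraction_lower_bound[OF assms(6,8,9) fin])
    then show "1 / real l \<le> f j i - (real l - real (card (A i \<inter> Wset w j)) - 1) / real l"
      by (simp add: diff_divide_distrib)
  qed
  finally show ?thesis
    unfolding S_def l_def .
qed

end
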